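(* Let $D$ be a nonempty domain, let $\mathcal I_1$ be a set of unary predicates on $D$ and $\mathcal I_2$ a set of binary predicates on $D$. Let $\bar L\ge 0$ and $\bar H\ge 1$ be integers. Then every predicate in $\mathcal{FOET}_{\{\bar L,\bar H\}}(\mathcal I_1,\mathcal I_2)$ is computed by some join-chain computation with $\bar L$ layers and at most $\bar H$ heads per layer, with input $\mathcal I_1$ and binary predicates from $\mathcal I_2$.
   Context: All predicates are interpreted on $D$; an empty conjunction is the constant-true predicate. $\mathcal{FOET}(\mathcal I_1,\mathcal I_2)$: the set of unary predicates $P(y_0)$ (free variable $y_0$) that are logically equivalent to a formula $$P(y_0)=\exists y_1\cdots\exists y_T\ \bigvee_{m=1}^{M}\Big[\Big(\bigwedge_{t\in\mathcal N^m}P^m_t(y_t)\Big)\wedge\Big(\bigwedge_{(t_p,t_c)\in\mathcal E^m}W^m_{(t_p,t_c)}(y_{t_p},y_{t_c})\Big)\wedge Q^m\Big]$$ in which: each $\mathcal N^m\subseteq\{0,\dots,T\}$ contains $0$; each $\mathcal E^m$ is a set of pairs $(t_p,t_c)$ of elements of $\mathcal N^m$ such that the graph $\mathcal G^m=(\mathcal N^m,\mathcal E^m)$ is a tree, regarded as rooted at $0$ with $t_p$ the parent of $t_c$ for each edge; each $W^m_{(t_p,t_c)}\in\mathcal I_2$; each $P^m_t$ is a finite conjunction of predicates from $\mathcal I_1$; and each $Q^m$ is a propositional constant (true or false). Height and width: for the tree $\mathcal G^m$ let $L^m$ be its height (the maximum number of edges on a path from the root $0$ to a vertex) and $H^m$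 its number of leaf nodes. The height of the predicate is $L=\max_m L^m$ and its width is $H=\sum_m H^m$. $\mathcal{FOET}_{\{\bar L,\bar H\}}(\mathcal I_1,\mathcal I_2)$ is the set of predicates in $\mathcal{FOET}(\mathcal I_1,\mathcal I_2)$ admitting such a representation with $L\le\bar L$ and $H\le\bar H$. Join operation: for a binary predicate $W$ and unary predicate $R$, the join is the unary predicate $x\mapsto\exists y\in D\,(W(x,y)\wedge R(y))$. Join-chain computation with $\bar L$ layers and at most $\bar H$ heads per layer (symbolic model of the network consisting of stacked multi-head self-attention blocks, each head's attention matrix representing a binary predicate and its value tensor a unary predicate, with a skip connection and an aggregation/feed-forward step after each block): let $\mathcal C_0$ be the set of all finite conjunctions of predicates in $\mathcal I_1$. For $l=1,\dots,\bar L$, layer $l$ consists of at most $\bar H$ heads; head $k$ selects some $W\in\mathcal I_2$ and some $R\in\mathcal C_{l-1}$ and outputs the join $J_{l,k}(x)=\exists y\,(W(x,y)\wedge R(y))$; then (skip connection plus aggregation) $\mathcal C_l$ is the set of all finite conjunctions of predicates from $\mathcal C_{l-1}\cup\{J_{l,k}\}_k$. The output of the computation is a predicate of the form $x\mapsto\bigvee_{m=1}^{M}(R_m(x)\wedge q_m)$ with $R_m\in\mathcal C_{\bar L}$ and $q_m$ propositional constants. A unary predicate is computed by such a computation if it equals (on $D$) the output for some choice of heads and final disjunction. (Standing assumption of the paper: every $W\in\mathcal I_2$ is a function of some subset of the inputs $\mathcal I_1$, so that the heads may realize any $W\in\mathcal I_2$; this is built into the model above by allowing heads to select any $W\in\mathcal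 I_2$.) *)

theory Defs
  imports Main
begin

definition rooted_tree :: "nat set \<Rightarrow> (nat \<times> nat) set \<Rightarrow> bool" where
  "rooted_tree N E \<longleftrightarrow>
     finite N \<and> 0 \<in> N \<and> E \<subseteq> N \<times> N \<and>
     (\<forall>(p, c) \<in> E. c \<noteq> 0) \<and>
     (\<forall>c \<in> N - {0}. \<exists>!p. (p, c) \<in> E) \<and>
     (\<forall>v \<in> N. (0, v) \<in> E\<^sup>*)"

definition tree_height :: "(nat \<times> nat) set \<Rightarrow> nat" where
  "tree_height E = Max {k. \<exists>v. (0, v) \<in> E ^^ k}"

definition tree_leaves :: "nat set \<Rightarrow> (nat \<times> nat) set \<Rightarrow> nat set" where
  "tree_leaves N E = {v \<in> N. \<forall>c. (v, c) \<notin> E}"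

text \<open>Finite conjunctions of predicates are represented by lists; the empty list
  is the constant-true predicate. Equality of predicates is on D.\<close>

definition FOET_LH ::
  "'a set \<Rightarrow> ('a \<Rightarrow> bool) set \<Rightarrow> ('a \<Rightarrow> 'a \<Rightarrow> bool) set \<Rightarrow> nat \<Rightarrow> nat \<Rightarrow> ('a \<Rightarrow> bool) \<Rightarrow> bool" where
  "FOET_LH D I1 I2 Lb Hb P \<longleftrightarrow>
    (\<exists>(T::nat) (M::nat) (Nn :: nat \<Rightarrow> nat set) (E :: nat \<Rightarrow> (nat \<times> nat) set)
       (Ps :: nat \<Rightarrow> nat \<Rightarrow> ('a \<Rightarrow> bool) list) (W :: nat \<Rightarrow> nat \<times> nat \<Rightarrow> 'a \<Rightarrow> 'a \<Rightarrow> bool)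
       (Q :: nat \<Rightarrow> bool).
      (\<forall>m < M. rooted_tree (Nn m) (E m) \<and> Nn m \<subseteq> {0..T}
               \<and> (\<forall>e \<in> E m. W m e \<in> I2)
               \<and> (\<forall>t \<in> Nn m. set (Ps m t) \<subseteq> I1)
               \<and> tree_height (E m) \<le> Lb)
      \<and> (\<Sum>m<M. card (tree_leaves (Nn m) (E m))) \<le> Hb
      \<and> (\<forall>x \<in> D. P x \<longleftrightarrow>
           (\<exists>y :: nat \<Rightarrow> 'a. y 0 = x \<and> (\<forall>t \<in> {1..T}. y t \<in> D) \<and>
              (\<exists>m < M. (\<forall>t \<in> Nn m. \<forall>R \<in> set (Ps m t). R (y t))
                      \<and> (\<forall>(p, c) \<in> E m. W m (p, c) (y p) (y c))
                      \<and> Q m))))"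

definition join :: "'a set \<Rightarrow> ('a \<Rightarrow> 'a \<Rightarrow> bool) \<Rightarrow> ('a \<Rightarrow> bool) \<Rightarrow> 'a \<Rightarrow> bool" where
  "join D W R = (\<lambda>x. \<exists>y \<in> D. W x y \<and> R y)"

definition conj_closure :: "('a \<Rightarrow> bool) set \<Rightarrow> ('a \<Rightarrow> bool) set" where
  "conj_closure S = {(\<lambda>x. \<forall>R \<in> set rs. R x) | rs. set rs \<subseteq> S}"

text \<open>heads l = list of (W, R) selected by the heads of layer l (l \<ge> 1).\<close>
fun layer_preds ::
  "'a set \<Rightarrow> ('a \<Rightarrow> bool) set \<Rightarrow> (nat \<Rightarrow> (('a \<Rightarrow> 'a \<Rightarrow> bool) \<times> ('a \<Rightarrow> bool)) list) \<Rightarrow> nat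
   \<Rightarrow> ('a \<Rightarrow> bool) set" where
  "layer_preds D I1 heads 0 = conj_closure I1"
| "layer_preds D I1 heads (Suc l) =
     conj_closure (layer_preds D I1 heads l \<union> (\<lambda>(W, R). join D W R) ` set (heads (Suc l)))"

definition join_chain_computes ::
  "'a set \<Rightarrow> ('a \<Rightarrow> bool) set \<Rightarrow> ('a \<Rightarrow> 'a \<Rightarrow> bool) set \<Rightarrow> nat \<Rightarrow> nat \<Rightarrow> ('a \<Rightarrow> bool) \<Rightarrow> bool" where
  "join_chain_computes D I1 I2 Lb Hb P \<longleftrightarrow>
    (\<exists>heads outs.
       (\<forall>l \<in> {1..Lb}. length (heads l) \<le> Hb \<and>
          (\<forall>(W, R) \<in> set (heads l). W \<in> I2 \<and> R \<in> layer_preds D I1 heads (l - 1)))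
     \<and> (\<forall>(R, q) \<in> set outs. R \<in> layer_preds D I1 heads Lb)
     \<and> (\<forall>x \<in> D. P x \<longleftrightarrow> (\<exists>(R, q) \<in> set outs. R x \<and> q)))"

end

theory Submission
  imports Defs "HOL-Library.Product_Lexorder"
begin

text \<open>Each tree of the formula is evaluated bottom-up: the formula of the subtree at a vertex c
  is the conjunction of the labels of c and of the joins, along the edges to the children of c,
  with the formulas of their subtrees. Scheduling the join along the edge into c in layer
  1 + (height of the subtree at c) makes every subtree formula available from the layer equal to
  its height on, so each root formula is ready after L layers. The joins of one layer enter
  vertices of equal subtree height, and there are at most as many of those as leaves.\<close>

lemma mem_conj_closure: "R \<in> S \<Longrightarrow> R \<in> conj_closure S"
  unfolding conj_closure_def by (rule CollectI, rule exI[of _ "[R]"]) simp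

lemma conj_closure_Ball:
  "set rs \<subseteq> conj_closure S \<Longrightarrow> (\<lambda>x. \<forall>R\<in>set rs. R x) \<in> conj_closure S"
proof (induction rs)
  case Nil
  show ?case unfolding conj_closure_def by (rule CollectI, rule exI[of _ "[]"]) simp
next
  case (Cons R rs)
  obtain r1 r2 where "R = (\<lambda>x. \<forall>R\<in>set r1. R x)" "set r1 \<subseteq> S"
      "(\<lambda>x. \<forall>R\<in>set rs. R x) = (\<lambda>x. \<forall>R\<in>set r2. R x)" "set r2 \<subseteq> S"
    using Cons unfolding conj_closure_def by auto
  then have "(\<lambda>x. \<forall>R\<in>set (R # rs). R x) = (\<lambda>x. \<forall>R\<in>set (r1 @ r2). R x)"
    and "set (r1 @ r2) \<subseteq> S"
    by (auto simp: fun_eq_iff dest: fun_cong)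
  then show ?case unfolding conj_closure_def by blast
qed

lemma layer_preds_Ball:
  "set rs \<subseteq> layer_preds D I1 heads l \<Longrightarrow> (\<lambda>x. \<forall>R\<in>set rs. R x) \<in> layer_preds D I1 heads l"
  by (cases l) (simp_all add: conj_closure_Ball)

lemma layer_preds_mono: "l \<le> k \<Longrightarrow> layer_preds D I1 heads l \<subseteq> layer_preds D I1 heads k"
  by (rule lift_Suc_mono_le[where f = "layer_preds D I1 heads"]) (auto intro: mem_conj_closure)

lemma join_in_layer_preds:
  "(W, R) \<in> set (heads (Suc l)) \<Longrightarrow> join D W R \<in> layer_preds D I1 heads (Suc l)"
  by (force intro: mem_conj_closure)

lemma inputs_subset_layer_preds: "I1 \<subseteq> layer_preds D I1 heads l"
  using layer_preds_mono[of 0 l D I1 heads] by (auto intro: mem_conj_closure)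

lemma join_chain_computes_cong:
  assumes "\<And>x. x \<in> D \<Longrightarrow> P x = P' x" and "join_chain_computes D I1 I2 Lb Hb P'"
  shows "join_chain_computes D I1 I2 Lb Hb P"
  using assms unfolding join_chain_computes_def by simp

definition depth :: "(nat \<times> nat) set \<Rightarrow> nat \<Rightarrow> nat" where
  "depth E v = (THE k. (0, v) \<in> E ^^ k)"

definition subtree_height :: "(nat \<times> nat) set \<Rightarrow> nat \<Rightarrow> nat" where
  "subtree_height E c = Max {k. \<exists>v. (c, v) \<in> E ^^ k}"

lemma tree_height_eq_subtree_height: "tree_height E = subtree_height E 0"
  unfolding tree_height_def subtree_height_def ..

locale rtree =
  fixes N :: "nat set" and E :: "(nat \<times> nat) set"
  assumes rooted_tree: "rooted_tree N E"
begin

lemma finite_vertices: "finite N" and root_in: "0 \<in> N" and edges_subset: "E \<subseteq> N \<times> N"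
  and root_no_parent: "(p, 0) \<notin> E"
  and parent_exists: "c \<in> N - {0} \<Longrightarrow> \<exists>!p. (p, c) \<in> E"
  and reachable_from_root: "v \<in> N \<Longrightarrow> (0, v) \<in> E\<^sup>*"
  using rooted_tree unfolding rooted_tree_def by auto

lemma finite_edges: "finite E"
  using finite_subset[OF edges_subset] finite_vertices by blast

lemma parent_unique: "(p, c) \<in> E \<Longrightarrow> (p', c) \<in> E \<Longrightarrow> p = p'"
  using parent_exists[of c] edges_subset root_no_parent by blast

lemma rtrancl_closed: "(a, v) \<in> E\<^sup>* \<Longrightarrow> a \<in> N \<Longrightarrow> v \<in> N"
  by (induction rule: rtrancl_induct) (use edges_subset in auto)

lemma relpow_closed: "(a, v) \<in> E ^^ k \<Longrightarrow> a \<in> N \<Longrightarrow> v \<in> N"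
  using rtrancl_closed relpow_imp_rtrancl by blast

lemma relpow_source_unique: "(a, t) \<in> E ^^ k \<Longrightarrow> (b, t) \<in> E ^^ k \<Longrightarrow> a = b"
proof (induction k arbitrary: t)
  case (Suc k)
  then obtain u u' where "(a, u) \<in> E ^^ k" "(u, t) \<in> E" "(b, u') \<in> E ^^ k" "(u', t) \<in> E"
    by (auto elim!: relpow_Suc_E)
  then show ?case using Suc.IH parent_unique by blast
qed simp

lemma relpow_to_root: "(a, 0) \<in> E ^^ k \<Longrightarrow> k = 0"
  by (cases k) (auto elim: relpow_Suc_E simp: root_no_parent)

lemma root_path_length_unique:
  assumes "(0, v) \<in> E ^^ k" and "(0, v) \<in> E ^^ j" and "k \<le> j"
  shows "k = j"
proof -
  obtain u where "(0, u) \<in> E ^^ (j - k)" "(u, v) \<in> E ^^ k"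
    using assms(2,3) relpow_add[of "j - k" k E] by auto
  then show ?thesis using relpow_source_unique[OF assms(1)] relpow_to_root assms(3) by fastforce
qed

lemma depth_eqI: "(0, v) \<in> E ^^ k \<Longrightarrow> depth E v = k"
proof -
  assume k: "(0, v) \<in> E ^^ k"
  have "j = k" if "(0, v) \<in> E ^^ j" for j
    using root_path_length_unique[OF k that] root_path_length_unique[OF that k] by linarith
  then show ?thesis unfolding depth_def using k by blast
qed

lemma depth_relpow: "a \<in> N \<Longrightarrow> (a, b) \<in> E ^^ j \<Longrightarrow> depth E b = depth E a + j"
proof -
  assume "a \<in> N" "(a, b) \<in> E ^^ j"
  moreover obtain d where "(0, a) \<in> E ^^ d"
    using reachable_from_root[OF \<open>a \<in> N\<close>] rtrancl_power by blast
  ultimately show ?thesis using depth_eqI relpow_add[of d j E] by auto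
qed

lemma depth_edge: "(p, c) \<in> E \<Longrightarrow> depth E c = Suc (depth E p)"
  using depth_relpow[of p c 1] edges_subset by auto

lemma finite_path_lengths: "c \<in> N \<Longrightarrow> finite {k. \<exists>v. (c, v) \<in> E ^^ k}"
proof (rule finite_subset)
  assume c: "c \<in> N"
  show "{k. \<exists>v. (c, v) \<in> E ^^ k} \<subseteq> {..Max (depth E ` N)}"
  proof
    fix k assume "k \<in> {k. \<exists>v. (c, v) \<in> E ^^ k}"
    then obtain v where v: "(c, v) \<in> E ^^ k" by blast
    then have "k \<le> depth E v" using depth_relpow[OF c] by simp
    also have "\<dots> \<le> Max (depth E ` N)" using relpow_closed[OF v c] finite_vertices by simp
    finally show "k \<in> {..Max (depth E ` N)}" by simp
  qed
qed simp

lemma relpow_le_subtree_height: "c \<in> N \<Longrightarrow> (c, v) \<in> E ^^ k \<Longrightarrow> k \<le> subtree_height E c"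
  unfolding subtree_height_def using finite_path_lengths by (intro Max_ge) auto

lemma subtree_height_attained: "c \<in> N \<Longrightarrow> \<exists>v. (c, v) \<in> E ^^ subtree_height E c"
proof -
  assume "c \<in> N"
  moreover have "(c, c) \<in> E ^^ 0" by simp
  ultimately have "subtree_height E c \<in> {k. \<exists>v. (c, v) \<in> E ^^ k}"
    unfolding subtree_height_def by (intro Max_in finite_path_lengths) blast+
  then show ?thesis by blast
qed

lemma subtree_height_edge: "(p, c) \<in> E \<Longrightarrow> Suc (subtree_height E c) \<le> subtree_height E p"
proof -
  assume pc: "(p, c) \<in> E"
  then obtain v where "(c, v) \<in> E ^^ subtree_height E c"
    using subtree_height_attained edges_subset by blast
  with pc have "(p, v) \<in> E ^^ Suc (subtree_height E c)" by (rule relpow_Suc_I2)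
  then show ?thesis using relpow_le_subtree_height pc edges_subset by blast
qed

lemma deepest_leaf: "c \<in> N \<Longrightarrow> \<exists>v \<in> tree_leaves N E. (c, v) \<in> E ^^ subtree_height E c"
proof -
  assume c: "c \<in> N"
  then obtain v where v: "(c, v) \<in> E ^^ subtree_height E c" using subtree_height_attained by blast
  have "(v, w) \<notin> E" for w
    using relpow_le_subtree_height[OF c relpow_Suc_I[OF v]] by auto
  then show ?thesis using v relpow_closed[OF v c] unfolding tree_leaves_def by blast
qed

text \<open>Vertices of equal subtree height have disjoint subtrees, so sending each to a deepest
  leaf below it is injective.\<close>
lemma card_height_level_le_leaves:
  "card {(p, c) \<in> E. subtree_height E c = h} \<le> card (tree_leaves N E)"
proof -
  define leaf where "leaf c = (SOME v. v \<in> tree_leaves N E \<and> (c, v) \<in> E ^^ subtree_height E c)" for c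
  have leaf: "leaf c \<in> tree_leaves N E \<and> (c, leaf c) \<in> E ^^ subtree_height E c"
    if "(p, c) \<in> E" for p c
  proof -
    have "c \<in> N" using that edges_subset by auto
    then obtain v where "v \<in> tree_leaves N E \<and> (c, v) \<in> E ^^ subtree_height E c"
      using deepest_leaf by blast
    then show ?thesis unfolding leaf_def by (rule someI)
  qed
  have "inj_on (leaf \<circ> snd) {(p, c) \<in> E. subtree_height E c = h}"
  proof (rule inj_onI)
    fix e e' assume "e \<in> {(p, c) \<in> E. subtree_height E c = h}" "e' \<in> {(p, c) \<in> E. subtree_height E c = h}"
      and "(leaf \<circ> snd) e = (leaf \<circ> snd) e'"
    moreover obtain p c p' c' where e: "e = (p, c)" "e' = (p', c')" by fastforce
    ultimately have pc: "(p, c) \<in> E" "(p', c') \<in> E"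
      and "(c, leaf c) \<in> E ^^ h" "(c', leaf c) \<in> E ^^ h"
      using leaf[of p c] leaf[of p' c'] by auto
    then have "c = c'" using relpow_source_unique by blast
    then show "e = e'" using parent_unique pc e by blast
  qed
  moreover have "(leaf \<circ> snd) ` {(p, c) \<in> E. subtree_height E c = h} \<subseteq> tree_leaves N E"
    using leaf by force
  moreover have "finite (tree_leaves N E)" using finite_vertices unfolding tree_leaves_def by simp
  ultimately show ?thesis by (rule card_inj_on_le)
qed

lemma not_rtrancl_child_parent: "(v, c) \<in> E \<Longrightarrow> (c, v) \<notin> E\<^sup>*"
proof
  assume vc: "(v, c) \<in> E" and "(c, v) \<in> E\<^sup>*"
  then obtain j where "(c, v) \<in> E ^^ j" using rtrancl_power by blast
  moreover have "c \<in> N" using vc edges_subset by auto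
  ultimately have "depth E v = depth E c + j" by (rule depth_relpow[rotated])
  then show False using depth_edge[OF vc] by simp
qed

lemma child_unique_ancestor:
  assumes "(v, c1) \<in> E" "(v, c2) \<in> E" "(c1, t) \<in> E\<^sup>*" "(c2, t) \<in> E\<^sup>*"
  shows "c1 = c2"
proof -
  obtain j1 j2 where j: "(c1, t) \<in> E ^^ j1" "(c2, t) \<in> E ^^ j2"
    using assms(3,4) rtrancl_power by blast
  have "c1 \<in> N" "c2 \<in> N" using assms(1,2) edges_subset by auto
  moreover have "depth E c1 = depth E c2" using depth_edge assms(1,2) by simp
  ultimately have "j1 = j2" using depth_relpow[of c1 t j1] depth_relpow[of c2 t j2] j by simp
  then show ?thesis using relpow_source_unique j by blast
qed

end

text \<open>y v itself is not required to lie in D: below a join it is constrained by the join,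
  at the root it is the input x.\<close>
definition subtree_witness ::
  "(nat \<times> nat) set \<Rightarrow> 'a set \<Rightarrow> (nat \<Rightarrow> ('a \<Rightarrow> bool) list) \<Rightarrow> (nat \<times> nat \<Rightarrow> 'a \<Rightarrow> 'a \<Rightarrow> bool)
   \<Rightarrow> nat \<Rightarrow> (nat \<Rightarrow> 'a) \<Rightarrow> bool" where
  "subtree_witness E D Ps W v y \<longleftrightarrow>
     (\<forall>t \<in> E\<^sup>* `` {v} - {v}. y t \<in> D) \<and>
     (\<forall>t \<in> E\<^sup>* `` {v}. \<forall>R \<in> set (Ps t). R (y t)) \<and>
     (\<forall>(p, c) \<in> E. p \<in> E\<^sup>* `` {v} \<longrightarrow> W (p, c) (y p) (y c))"

definition subtree_sat ::
  "(nat \<times> nat) set \<Rightarrow> 'a set \<Rightarrow> (nat \<Rightarrow> ('a \<Rightarrow> bool) list) \<Rightarrow> (nat \<times> nat \<Rightarrow> 'a \<Rightarrow> 'a \<Rightarrow> bool)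
   \<Rightarrow> nat \<Rightarrow> 'a \<Rightarrow> bool" where
  "subtree_sat E D Ps W v x \<longleftrightarrow> (\<exists>y. y v = x \<and> subtree_witness E D Ps W v y)"

context rtree
begin

lemma subtree_witness_child:
  assumes "subtree_witness E D Ps W v y" and vc: "(v, c) \<in> E"
  shows "y c \<in> D \<and> W (v, c) (y v) (y c) \<and> subtree_witness E D Ps W c y"
proof -
  have "E\<^sup>* `` {c} \<subseteq> E\<^sup>* `` {v}" using vc by (auto intro: converse_rtrancl_into_rtrancl)
  moreover have "v \<notin> E\<^sup>* `` {c}" "c \<noteq> v" using not_rtrancl_child_parent[OF vc] by auto
  ultimately show ?thesis using assms unfolding subtree_witness_def by blast
qed

text \<open>The witnesses of the children are glued; distinct children have disjoint subtrees,
  none of which contains v.\<close>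
lemma subtree_witness_glue:
  assumes labels: "\<forall>R \<in> set (Ps v). R x"
    and children: "\<And>c. (v, c) \<in> E \<Longrightarrow> Y c c \<in> D \<and> W (v, c) x (Y c c) \<and> subtree_witness E D Ps W c (Y c)"
  shows "\<exists>y. y v = x \<and> subtree_witness E D Ps W v y"
proof -
  define y where "y t = (if t = v then x else Y (THE c. (v, c) \<in> E \<and> (c, t) \<in> E\<^sup>*) t)" for t
  have below_child: "y t = Y c t" if "(v, c) \<in> E" "(c, t) \<in> E\<^sup>*" for c t
  proof -
    have "(THE c. (v, c) \<in> E \<and> (c, t) \<in> E\<^sup>*) = c"
      using that child_unique_ancestor by blast
    moreover have "t \<noteq> v" using that not_rtrancl_child_parent by blast
    ultimately show ?thesis by (simp add: y_def)
  qed
  have to_child: "\<exists>c. (v, c) \<in> E \<and> (c, t) \<in> E\<^sup>*" if "t \<in> E\<^sup>* `` {v} - {v}" for t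
    using that by (auto elim: converse_rtranclE)
  have "y t \<in> D" if t: "t \<in> E\<^sup>* `` {v} - {v}" for t
  proof -
    obtain c where c: "(v, c) \<in> E" "(c, t) \<in> E\<^sup>*" using to_child t by blast
    then show ?thesis
      using below_child[OF c] children[OF c(1)] unfolding subtree_witness_def by (cases "t = c") auto
  qed
  moreover have "R (y t)" if t: "t \<in> E\<^sup>* `` {v}" and R: "R \<in> set (Ps t)" for t R
  proof (cases "t = v")
    case True
    then show ?thesis using labels R by (auto simp: y_def)
  next
    case False
    then obtain c where c: "(v, c) \<in> E" "(c, t) \<in> E\<^sup>*" using to_child t by blast
    then show ?thesis
      using below_child[OF c] children[OF c(1)] R unfolding subtree_witness_def by auto
  qed
  moreover have "W (p, q) (y p) (y q)" if pq: "(p, q) \<in> E" "p \<in> E\<^sup>* `` {v}" for p q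
  proof (cases "p = v")
    case True
    then show ?thesis using pq below_child[of q q] children by (simp add: y_def)
  next
    case False
    then obtain c where c: "(v, c) \<in> E" "(c, p) \<in> E\<^sup>*" using to_child pq by blast
    then have "(c, q) \<in> E\<^sup>*" using pq by (simp add: rtrancl_into_rtrancl)
    then show ?thesis
      using pq below_child[OF c] below_child[OF c(1)] children[OF c(1)] c(2)
      unfolding subtree_witness_def by auto
  qed
  ultimately have "subtree_witness E D Ps W v y" unfolding subtree_witness_def by blast
  moreover have "y v = x" by (simp add: y_def)
  ultimately show ?thesis by blast
qed

lemma subtree_sat_iff:
  "subtree_sat E D Ps W v x \<longleftrightarrow>
     (\<forall>R \<in> set (Ps v). R x) \<and> (\<forall>c. (v, c) \<in> E \<longrightarrow> join D (W (v, c)) (subtree_sat E D Ps W c) x)"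
proof
  assume "subtree_sat E D Ps W v x"
  then obtain y where y: "y v = x" "subtree_witness E D Ps W v y" unfolding subtree_sat_def by blast
  then have "\<forall>R \<in> set (Ps v). R x" unfolding subtree_witness_def by auto
  moreover have "join D (W (v, c)) (subtree_sat E D Ps W c) x" if "(v, c) \<in> E" for c
    using subtree_witness_child[OF y(2) that] y(1) unfolding join_def subtree_sat_def by blast
  ultimately show "(\<forall>R \<in> set (Ps v). R x) \<and>
      (\<forall>c. (v, c) \<in> E \<longrightarrow> join D (W (v, c)) (subtree_sat E D Ps W c) x)"
    by blast
next
  assume "(\<forall>R \<in> set (Ps v). R x) \<and> (\<forall>c. (v, c) \<in> E \<longrightarrow> join D (W (v, c)) (subtree_sat E D Ps W c) x)"
  then have labels: "\<forall>R \<in> set (Ps v). R x"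
    and "\<forall>c. \<exists>y. (v, c) \<in> E \<longrightarrow> y c \<in> D \<and> W (v, c) x (y c) \<and> subtree_witness E D Ps W c y"
    unfolding join_def subtree_sat_def by blast+
  then obtain Y where "\<And>c. (v, c) \<in> E \<Longrightarrow> Y c c \<in> D \<and> W (v, c) x (Y c c) \<and> subtree_witness E D Ps W c (Y c)"
    by metis
  from subtree_witness_glue[OF labels this] show "subtree_sat E D Ps W v x"
    unfolding subtree_sat_def .
qed

lemma subtree_sat_root_iff:
  assumes "N \<subseteq> {0..T}" and "D \<noteq> {}"
  shows "subtree_sat E D Ps W 0 x \<longleftrightarrow>
    (\<exists>y. y 0 = x \<and> (\<forall>t \<in> {1..T}. y t \<in> D) \<and>
         (\<forall>t \<in> N. \<forall>R \<in> set (Ps t). R (y t)) \<and> (\<forall>(p, c) \<in> E. W (p, c) (y p) (y c)))"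
proof -
  have subtree_root: "E\<^sup>* `` {0} = N" using reachable_from_root rtrancl_closed root_in by blast
  obtain d where "d \<in> D" using assms(2) by blast
  show ?thesis
  proof
    assume "subtree_sat E D Ps W 0 x"
    then obtain y where y: "y 0 = x" "\<forall>t \<in> N - {0}. y t \<in> D"
      "\<forall>t \<in> N. \<forall>R \<in> set (Ps t). R (y t)" "\<forall>(p, c) \<in> E. p \<in> N \<longrightarrow> W (p, c) (y p) (y c)"
      unfolding subtree_sat_def subtree_witness_def subtree_root by blast
    define y' where "y' t = (if t \<in> N then y t else d)" for t
    have "y' 0 = x" using y(1) root_in by (simp add: y'_def)
    moreover have "\<forall>t \<in> {1..T}. y' t \<in> D" using y(2) \<open>d \<in> D\<close> by (simp add: y'_def)
    moreover have "\<forall>t \<in> N. \<forall>R \<in> set (Ps t). R (y' t)" using y(3) by (simp add: y'_def)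
    moreover have "\<forall>(p, c) \<in> E. W (p, c) (y' p) (y' c)" using y(4) edges_subset by (auto simp: y'_def)
    ultimately show "\<exists>y. y 0 = x \<and> (\<forall>t \<in> {1..T}. y t \<in> D) \<and>
         (\<forall>t \<in> N. \<forall>R \<in> set (Ps t). R (y t)) \<and> (\<forall>(p, c) \<in> E. W (p, c) (y p) (y c))"
      by blast
  next
    assume "\<exists>y. y 0 = x \<and> (\<forall>t \<in> {1..T}. y t \<in> D) \<and>
         (\<forall>t \<in> N. \<forall>R \<in> set (Ps t). R (y t)) \<and> (\<forall>(p, c) \<in> E. W (p, c) (y p) (y c))"
    then obtain y where y: "y 0 = x" "\<forall>t \<in> {1..T}. y t \<in> D"
      "\<forall>t \<in> N. \<forall>R \<in> set (Ps t). R (y t)" "\<forall>(p, c) \<in> E. W (p, c) (y p) (y c)"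
      by blast
    moreover have "y t \<in> D" if "t \<in> N - {0}" for t
    proof -
      have "t \<in> {1..T}" using that assms(1) by fastforce
      then show ?thesis using y(2) by blast
    qed
    ultimately show "subtree_sat E D Ps W 0 x"
      unfolding subtree_sat_def subtree_witness_def subtree_root by blast
  qed
qed

end

locale tree_family =
  fixes D :: "'a set" and I1 :: "('a \<Rightarrow> bool) set" and I2 :: "('a \<Rightarrow> 'a \<Rightarrow> bool) set"
    and M :: nat and Nn :: "nat \<Rightarrow> nat set" and E :: "nat \<Rightarrow> (nat \<times> nat) set"
    and Ps :: "nat \<Rightarrow> nat \<Rightarrow> ('a \<Rightarrow> bool) list" and W :: "nat \<Rightarrow> nat \<times> nat \<Rightarrow> 'a \<Rightarrow> 'a \<Rightarrow> bool"
  assumes tree: "m < M \<Longrightarrow> rtree (Nn m) (E m)"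
    and edge_labels: "m < M \<Longrightarrow> e \<in> E m \<Longrightarrow> W m e \<in> I2"
    and vertex_labels: "m < M \<Longrightarrow> t \<in> Nn m \<Longrightarrow> set (Ps m t) \<subseteq> I1"
begin

abbreviation tree_sat :: "nat \<Rightarrow> nat \<Rightarrow> 'a \<Rightarrow> bool" where
  "tree_sat m \<equiv> subtree_sat (E m) D (Ps m) (W m)"

definition level_edges :: "nat \<Rightarrow> (nat \<times> nat \<times> nat) set" where
  "level_edges l = {(m, p, c). m < M \<and> (p, c) \<in> E m \<and> Suc (subtree_height (E m) c) = l}"

definition heads :: "nat \<Rightarrow> (('a \<Rightarrow> 'a \<Rightarrow> bool) \<times> ('a \<Rightarrow> bool)) list" where
  "heads l = map (\<lambda>(m, p, c). (W m (p, c), tree_sat m c)) (sorted_list_of_set (level_edges l))"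

lemma finite_level_edges: "finite (level_edges l)"
proof (rule finite_subset)
  show "level_edges l \<subseteq> Sigma {..<M} E" unfolding level_edges_def by auto
  show "finite (Sigma {..<M} E)" using rtree.finite_edges[OF tree] by auto
qed

lemma set_heads: "set (heads l) = (\<lambda>(m, p, c). (W m (p, c), tree_sat m c)) ` level_edges l"
  unfolding heads_def using finite_level_edges by simp

lemma length_heads_le_leaves: "length (heads l) \<le> (\<Sum>m<M. card (tree_leaves (Nn m) (E m)))"
proof -
  define level where "level m = {(p, c) \<in> E m. subtree_height (E m) c = l - 1}" for m
  have finite_level: "finite (level m)" if "m < M" for m
    unfolding level_def using rtree.finite_edges[OF tree[OF that]] by (auto intro: finite_subset)
  have "level_edges l \<subseteq> (\<Union>m<M. Pair m ` level m)"
    unfolding level_edges_def level_def by auto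
  then have "card (level_edges l) \<le> card (\<Union>m<M. Pair m ` level m)"
    using finite_level by (intro card_mono) auto
  also have "\<dots> \<le> (\<Sum>m<M. card (Pair m ` level m))" by (rule card_UN_le) simp
  also have "\<dots> = (\<Sum>m<M. card (level m))" by (simp add: card_image inj_on_def)
  also have "\<dots> \<le> (\<Sum>m<M. card (tree_leaves (Nn m) (E m)))"
    unfolding level_def by (intro sum_mono rtree.card_height_level_le_leaves tree) simp
  finally show ?thesis unfolding heads_def by simp
qed

lemma tree_sat_in_layer_preds:
  assumes m: "m < M" and c: "c \<in> Nn m"
  shows "tree_sat m c \<in> layer_preds D I1 heads (subtree_height (E m) c)"
proof -
  interpret rtree "Nn m" "E m" by (rule tree[OF m])
  define children where "children = sorted_list_of_set (E m `` {c})"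
  have set_children: "set children = {q. (c, q) \<in> E m}"
    unfolding children_def using finite_edges by auto
  define rs where "rs = Ps m c @ map (\<lambda>q. join D (W m (c, q)) (tree_sat m q)) children"
  have "tree_sat m c = (\<lambda>x. \<forall>R \<in> set rs. R x)"
    unfolding fun_eq_iff subtree_sat_iff[where v = c] rs_def by (simp add: set_children ball_Un)
  moreover have "set rs \<subseteq> layer_preds D I1 heads (subtree_height (E m) c)"
  proof
    fix R assume R: "R \<in> set rs"
    consider "R \<in> set (Ps m c)" | q where "(c, q) \<in> E m" "R = join D (W m (c, q)) (tree_sat m q)"
      using R set_children unfolding rs_def by auto
    then show "R \<in> layer_preds D I1 heads (subtree_height (E m) c)"
    proof cases
      case 1
      then show ?thesis using vertex_labels[OF m c] inputs_subset_layer_preds by blast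
    next
      case 2
      then have "(W m (c, q), tree_sat m q) \<in> set (heads (Suc (subtree_height (E m) q)))"
        unfolding set_heads level_edges_def using m by force
      then have "R \<in> layer_preds D I1 heads (Suc (subtree_height (E m) q))"
        using join_in_layer_preds 2(2) by blast
      then show ?thesis using layer_preds_mono[OF subtree_height_edge[OF 2(1)]] by blast
    qed
  qed
  ultimately show ?thesis using layer_preds_Ball by simp
qed

lemma heads_valid:
  assumes "(V, R) \<in> set (heads l)"
  shows "V \<in> I2 \<and> R \<in> layer_preds D I1 heads (l - 1)"
proof -
  obtain m p c where m: "m < M" and pc: "(p, c) \<in> E m"
    and l: "l - 1 = subtree_height (E m) c" and "V = W m (p, c)" "R = tree_sat m c"
    using assms unfolding set_heads level_edges_def by auto
  moreover have "c \<in> Nn m" using rtree.edges_subset[OF tree[OF m]] pc by blast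
  ultimately show ?thesis using edge_labels[OF m pc] tree_sat_in_layer_preds[OF m] by simp
qed

lemma join_chain_computes_forest:
  assumes "\<forall>m < M. tree_height (E m) \<le> Lb"
    and "(\<Sum>m<M. card (tree_leaves (Nn m) (E m))) \<le> Hb"
  shows "join_chain_computes D I1 I2 Lb Hb (\<lambda>x. \<exists>m < M. tree_sat m 0 x \<and> Q m)"
proof -
  define outs where "outs = map (\<lambda>m. (tree_sat m 0, Q m)) [0..<M]"
  have heads_length: "length (heads l) \<le> Hb" for l
    using length_heads_le_leaves assms(2) by (rule order_trans)
  have heads_layer: "\<forall>(V, R) \<in> set (heads l). V \<in> I2 \<and> R \<in> layer_preds D I1 heads (l - 1)" for l
    using heads_valid by blast
  have outs_layer: "R \<in> layer_preds D I1 heads Lb" if R: "(R, q) \<in> set outs" for R q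
  proof -
    obtain m where m: "m < M" and "R = tree_sat m 0" using R unfolding outs_def by auto
    then have "R \<in> layer_preds D I1 heads (tree_height (E m))"
      using tree_sat_in_layer_preds rtree.root_in[OF tree] by (simp add: tree_height_eq_subtree_height)
    then show ?thesis using layer_preds_mono assms(1) m by blast
  qed
  have outs_compute: "(\<exists>m < M. tree_sat m 0 x \<and> Q m) \<longleftrightarrow> (\<exists>(R, q) \<in> set outs. R x \<and> q)" for x
    unfolding outs_def by auto
  show ?thesis unfolding join_chain_computes_def
  proof (intro exI[of _ heads] exI[of _ outs] conjI)
    show "\<forall>l \<in> {1..Lb}. length (heads l) \<le> Hb \<and>
        (\<forall>(V, R) \<in> set (heads l). V \<in> I2 \<and> R \<in> layer_preds D I1 heads (l - 1))"
      using heads_length heads_layer by blast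
    show "\<forall>(R, q) \<in> set outs. R \<in> layer_preds D I1 heads Lb" using outs_layer by blast
    show "\<forall>x \<in> D. (\<exists>m < M. tree_sat m 0 x \<and> Q m) \<longleftrightarrow> (\<exists>(R, q) \<in> set outs. R x \<and> q)"
      using outs_compute by simp
  qed
qed

end

lemma FOET_LH_tree_family:
  assumes "FOET_LH D I1 I2 Lb Hb P" and "D \<noteq> {}"
  obtains M Nn E Ps W Q where "tree_family I1 I2 M Nn E Ps W"
    and "\<forall>m < M. tree_height (E m) \<le> Lb" and "(\<Sum>m<M. card (tree_leaves (Nn m) (E m))) \<le> Hb"
    and "\<And>x. x \<in> D \<Longrightarrow> P x \<longleftrightarrow> (\<exists>m < M. subtree_sat (E m) D (Ps m) (W m) 0 x \<and> Q m)"
proof -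
  obtain T M :: nat and Nn E Ps W Q where
    forest: "\<forall>m < M. rooted_tree (Nn m) (E m) \<and> Nn m \<subseteq> {0..T} \<and> (\<forall>e \<in> E m. W m e \<in> I2)
      \<and> (\<forall>t \<in> Nn m. set (Ps m t) \<subseteq> I1) \<and> tree_height (E m) \<le> Lb"
    and width: "(\<Sum>m<M. card (tree_leaves (Nn m) (E m))) \<le> Hb"
    and P: "\<forall>x \<in> D. P x \<longleftrightarrow> (\<exists>y. y 0 = x \<and> (\<forall>t \<in> {1..T}. y t \<in> D) \<and>
      (\<exists>m < M. (\<forall>t \<in> Nn m. \<forall>R \<in> set (Ps m t). R (y t)) \<and> (\<forall>(p, c) \<in> E m. W m (p, c) (y p) (y c)) \<and> Q m))"
    using assms(1) unfolding FOET_LH_def by (elim exE conjE) (rule that)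
  have rooted: "rooted_tree (Nn m) (E m)" and vertices: "Nn m \<subseteq> {0..T}"
    and edges: "\<forall>e \<in> E m. W m e \<in> I2" and labels: "\<forall>t \<in> Nn m. set (Ps m t) \<subseteq> I1"
    and height: "tree_height (E m) \<le> Lb" if "m < M" for m
    using forest that by simp_all
  have family: "tree_family I1 I2 M Nn E Ps W"
    by unfold_locales (simp_all add: rooted edges labels)
  have root_iff: "subtree_sat (E m) D (Ps m) (W m) 0 x \<longleftrightarrow> (\<exists>y. y 0 = x \<and>
      (\<forall>t \<in> {1..T}. y t \<in> D) \<and> (\<forall>t \<in> Nn m. \<forall>R \<in> set (Ps m t). R (y t)) \<and>
      (\<forall>(p, c) \<in> E m. W m (p, c) (y p) (y c)))" if "m < M" for m x
    using rtree.subtree_sat_root_iff[OF rtree.intro[OF rooted[OF that]] vertices[OF that] assms(2)] .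
  have P_iff: "P x \<longleftrightarrow> (\<exists>m < M. subtree_sat (E m) D (Ps m) (W m) 0 x \<and> Q m)" if "x \<in> D" for x
  proof -
    have "P x \<longleftrightarrow> (\<exists>m < M. (\<exists>y. y 0 = x \<and> (\<forall>t \<in> {1..T}. y t \<in> D) \<and>
        (\<forall>t \<in> Nn m. \<forall>R \<in> set (Ps m t). R (y t)) \<and> (\<forall>(p, c) \<in> E m. W m (p, c) (y p) (y c))) \<and> Q m)"
      using P[rule_format, OF that] by auto
    then show ?thesis using root_iff by auto
  qed
  show thesis by (rule that[OF family _ width P_iff]) (simp add: height)
qed

theorem theorem2:
  fixes D :: "'a set" and I1 :: "('a \<Rightarrow> bool) set" and I2 :: "('a \<Rightarrow> 'a \<Rightarrow> bool) set"
    and Lb Hb :: nat and P :: "'a \<Rightarrow> bool"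
  assumes "D \<noteq> {}" and "Hb \<ge> 1"
    and "FOET_LH D I1 I2 Lb Hb P"
  shows "join_chain_computes D I1 I2 Lb Hb P"
  using assms(3,1)
proof (rule FOET_LH_tree_family)
  fix M Nn E Ps W Q
  assume "tree_family I1 I2 M Nn E Ps W" "\<forall>m < M. tree_height (E m) \<le> Lb"
    "(\<Sum>m<M. card (tree_leaves (Nn m) (E m))) \<le> Hb"
  then have "join_chain_computes D I1 I2 Lb Hb (\<lambda>x. \<exists>m < M. subtree_sat (E m) D (Ps m) (W m) 0 x \<and> Q m)"
    by (rule tree_family.join_chain_computes_forest)
  moreover assume "\<And>x. x \<in> D \<Longrightarrow> P x \<longleftrightarrow> (\<exists>m < M. subtree_sat (E m) D (Ps m) (W m) 0 x \<and> Q m)"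
  ultimately show ?thesis by (rule join_chain_computes_cong[rotated])
qed

end
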